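(* Let $\omega>0$, $a,b\in\mathbb{R}$, and let $\chi_\delta(x,t)$ be the solution of $$ i\dot\chi(x,t)=-\chi''(x,t)+\omega\chi(x,t)-\delta(x)\bigl[a\chi(0,t)+b\operatorname{Re}\chi(0,t)\bigr] $$ with $\chi_\delta(x,0)=\delta(x)$. Then $$ \|\chi_\delta(\cdot,t)\|_{L^\infty}=O(t^{-1/2}),\qquad t\to0^+. $$
   Context: $\delta$ is the Dirac distribution at $0$. (In the paper $a=a(C^2)$, $b=2a'(C^2)C^2$, $\omega=a(C^2)^2/4$ and this is the linearized equation at a solitary wave; the solution is understood via the Duhamel formula with the free group $e^{i(\partial_x^2-\omega)t}$.) *)

theory Defs
  imports "HOL-Analysis.Analysis"
begin

text \<open>Kernel of the free group e^{i(d^2/dx^2 - omega) t} applied to the Dirac delta: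
  U(x,t) = e^{-i omega t} (4 pi i t)^{-1/2} e^{i x^2/(4t)}, for t > 0.\<close>
definition free_kernel :: "real \<Rightarrow> real \<Rightarrow> real \<Rightarrow> complex" where
  "free_kernel \<omega> x t =
     exp (- \<i> * complex_of_real (\<omega> * t)) * exp (\<i> * complex_of_real (x\<^sup>2 / (4 * t)))
       / csqrt (\<i> * complex_of_real (4 * pi * t))"

text \<open>chi (x,t) is a (Duhamel/mild) solution of
  i chi_t = - chi_xx + omega chi - delta(x) [a chi(0,t) + b Re chi(0,t)],  chi(.,0) = delta,
  i.e. for all x and t > 0
  chi(x,t) = U(x,t) + i int_0^t U(x,t-s) [a chi(0,s) + b Re chi(0,s)] ds
  (Lebesgue integral, the integrand being integrable).\<close>
definition delta_duhamel_solution ::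
  "real \<Rightarrow> real \<Rightarrow> real \<Rightarrow> (real \<Rightarrow> real \<Rightarrow> complex) \<Rightarrow> bool" where
  "delta_duhamel_solution \<omega> a b u \<longleftrightarrow>
     (\<forall>x. \<forall>t>0.
        set_integrable lborel {0<..<t}
          (\<lambda>s. free_kernel \<omega> x (t - s) *
                 (complex_of_real a * u 0 s + complex_of_real (b * Re (u 0 s)))) \<and>
        u x t = free_kernel \<omega> x t +
          \<i> * (LINT s:{0<..<t}|lborel. free_kernel \<omega> x (t - s) *
                 (complex_of_real a * u 0 s + complex_of_real (b * Re (u 0 s)))))"

end

theory Submission
  imports Defs
begin

text \<open>Let \<open>k \<tau> = (4 pi \<tau>) powr (-1/2)\<close> be the modulus of the free kernel, \<open>K = |a| + |b|\<close>,
  \<open>H s = |a u(0,s) + b Re u(0,s)|\<close> and \<open>J = k * H\<close>, where \<open>*\<close> is convolution over \<open>(0, t)\<close>;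
  \<open>J t\<close> is finite by the integrability hypothesis. The Duhamel formula gives
  \<open>|u(x,t)| \<le> k t + J t\<close> for every \<open>x\<close>, and inserting this at \<open>x = 0\<close> into \<open>H\<close> gives
  \<open>J \<le> K (k * k + k * J)\<close>. A Beta integral shows \<open>k * k = 1/4\<close> identically, so by Tonelli
  \<open>(k * (k * H)) t = 1/4 \<integral>\<^sub>0\<^sup>t H\<close>, which is at most \<open>sqrt (4 pi t) J t / 4\<close> because
  \<open>k (t - s) \<ge> k t\<close>. Hence \<open>J t \<le> K/4 + (K sqrt (4 pi t) / 4) J t\<close>, so \<open>J t \<le> K/2\<close> once
  \<open>K\<^sup>2 pi t \<le> 1\<close>, and then \<open>|u(x,t)| \<le> (1 + K/2) t powr (-1/2)\<close>. All convolutions are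
  nonnegative (\<open>ennreal\<close>) integrals, so Tonelli applies without any integrability of \<open>J\<close>.\<close>

lemma set_nn_integral_Beta_convolution:
  fixes r t \<alpha> \<beta> :: real
  assumes "r < t" "\<alpha> > 0" "\<beta> > 0"
  shows "(\<integral>\<^sup>+s\<in>{r<..<t}. ennreal ((t - s) powr (\<alpha> - 1) * (s - r) powr (\<beta> - 1)) \<partial>lborel)
       = ennreal ((t - r) powr (\<alpha> + \<beta> - 1) * Beta \<alpha> \<beta>)"
proof -
  define L where "L = t - r"
  have L: "L > 0" using assms by (simp add: L_def)
  let ?f = "\<lambda>s. ennreal ((t - s) powr (\<alpha> - 1) * (s - r) powr (\<beta> - 1)) * indicator {r<..<t} s"
  let ?B = "\<lambda>v. v powr (\<beta> - 1) * (1 - v) powr (\<alpha> - 1)"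
  have mem: "r + L * v \<in> {r<..<t} \<longleftrightarrow> v \<in> {0<..<1}" for v
  proof -
    have "r + L * v \<in> {r<..<t} \<longleftrightarrow> L * 0 < L * v \<and> L * v < L * 1"
      unfolding L_def greaterThanLessThan_iff mult_zero_right mult_1_right by linarith
    also have "\<dots> \<longleftrightarrow> v \<in> {0<..<1}" using L by (simp only: mult_less_cancel_left_pos) auto
    finally show ?thesis .
  qed
  have substitution:
    "?f (r + L * v) = ennreal (L powr (\<alpha> + \<beta> - 2)) * (ennreal (?B v) * indicator {0<..<1} v)" for v
  proof (cases "v \<in> {0<..<1}")
    case True
    have "t - (r + L * v) = L * (1 - v)" by (simp add: L_def algebra_simps)
    moreover have "L powr (\<alpha> + \<beta> - 2) = L powr (\<alpha> - 1) * L powr (\<beta> - 1)"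
      by (simp add: powr_add [symmetric])
    ultimately show ?thesis using True L mem [of v]
      by (simp add: powr_mult ennreal_mult' mult_ac)
  qed (use mem in simp)
  have "(\<integral>\<^sup>+v. ennreal (?B v) * indicator {0<..<1} v \<partial>lborel)
      = (\<integral>\<^sup>+v. ennreal (?B v) * indicator {0..1} v \<partial>lborel)"
    by (intro nn_integral_cong_AE)
      (auto intro!: AE_I [where N = "{0, 1}"] simp: indicator_def emeasure_lborel_countable)
  also have "\<dots> = ennreal (Beta \<beta> \<alpha>)"
    by (rule nn_integral_has_integral_lebesgue'[OF _ has_integral_Beta_real]) (use assms in auto)
  finally have Beta_integral:
    "(\<integral>\<^sup>+v. ennreal (?B v) * indicator {0<..<1} v \<partial>lborel) = ennreal (Beta \<beta> \<alpha>)" .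
  have "integral\<^sup>N lborel ?f = \<bar>L\<bar> * (\<integral>\<^sup>+v. ?f (r + L * v) \<partial>lborel)"
    by (rule nn_integral_real_affine) (use L in auto)
  also have "\<dots> = ennreal L * ennreal (L powr (\<alpha> + \<beta> - 2)) * ennreal (Beta \<beta> \<alpha>)"
    unfolding substitution using L by (simp add: nn_integral_cmult Beta_integral mult.assoc)
  also have "\<dots> = ennreal (L powr (\<alpha> + \<beta> - 1) * Beta \<alpha> \<beta>)"
    using L powr_add [of L 1 "\<alpha> + \<beta> - 2"] by (simp add: ennreal_mult' Beta_commute)
  finally show ?thesis by (simp add: L_def)
qed

definition kernel_modulus :: "real \<Rightarrow> real" where
  "kernel_modulus \<tau> = 1 / sqrt (4 * pi * \<tau>)"

lemma borel_measurable_kernel_modulus [measurable]: "kernel_modulus \<in> borel_measurable borel"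
  unfolding kernel_modulus_def by measurable

lemma kernel_modulus_nonneg: "\<tau> \<ge> 0 \<Longrightarrow> kernel_modulus \<tau> \<ge> 0"
  by (simp add: kernel_modulus_def)

lemma norm_free_kernel: "t > 0 \<Longrightarrow> cmod (free_kernel \<omega> x t) = kernel_modulus t"
  by (simp add: free_kernel_def kernel_modulus_def norm_divide norm_mult norm_exp_eq_Re)

lemma kernel_modulus_powr: "\<tau> > 0 \<Longrightarrow> kernel_modulus \<tau> = \<tau> powr (- 1 / 2) / sqrt (4 * pi)"
  by (simp add: kernel_modulus_def powr_minus_divide powr_half_sqrt [symmetric] real_sqrt_mult)

lemma set_nn_integral_kernel_modulus_convolution:
  assumes "r < t"
  shows "(\<integral>\<^sup>+s\<in>{r<..<t}. ennreal (kernel_modulus (t - s) * kernel_modulus (s - r)) \<partial>lborel) = 1 / 4"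
proof -
  have "(\<integral>\<^sup>+s\<in>{r<..<t}. ennreal (kernel_modulus (t - s) * kernel_modulus (s - r)) \<partial>lborel)
      = (\<integral>\<^sup>+s. ennreal (1 / (4 * pi)) *
           (ennreal ((t - s) powr (1 / 2 - 1) * (s - r) powr (1 / 2 - 1)) * indicator {r<..<t} s) \<partial>lborel)"
    by (intro nn_integral_cong)
      (auto simp: indicator_def kernel_modulus_powr ennreal_mult' [symmetric] real_sqrt_mult)
  also have "\<dots> = ennreal (1 / (4 * pi)) * ennreal (Beta (1 / 2) (1 / 2))"
    using set_nn_integral_Beta_convolution [OF assms, of "1 / 2" "1 / 2"] assms
    by (simp add: nn_integral_cmult)
  also have "\<dots> = 1 / 4"
    by (simp add: Beta_def Gamma_one_half_real ennreal_mult' [symmetric] ennreal_divide_numeral [symmetric])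
  finally show ?thesis .
qed

definition kernel_convolution :: "(real \<Rightarrow> ennreal) \<Rightarrow> real \<Rightarrow> ennreal" where
  "kernel_convolution f t = (\<integral>\<^sup>+s\<in>{0<..<t}. ennreal (kernel_modulus (t - s)) * f s \<partial>lborel)"

lemma borel_measurable_kernel_convolution [measurable]:
  assumes [measurable]: "f \<in> borel_measurable borel"
  shows "kernel_convolution f \<in> borel_measurable borel"
proof -
  have "kernel_convolution f
      = (\<lambda>t. \<integral>\<^sup>+s. (if 0 < s \<and> s < t then ennreal (kernel_modulus (t - s)) * f s else 0) \<partial>lborel)"
    unfolding kernel_convolution_def by (intro ext nn_integral_cong) (simp add: indicator_def)
  then show ?thesis
    by simp
qed

lemma kernel_convolution_mono:
  "(\<And>s. s \<in> {0<..<t} \<Longrightarrow> f s \<le> g s) \<Longrightarrow> kernel_convolution f t \<le> kernel_convolution g t"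
  unfolding kernel_convolution_def
  by (intro nn_integral_mono) (auto simp: indicator_def intro: mult_left_mono)

lemma kernel_convolution_cmult:
  assumes [measurable]: "f \<in> borel_measurable borel"
  shows "kernel_convolution (\<lambda>s. c * f s) t = c * kernel_convolution f t"
  unfolding kernel_convolution_def
  by (subst nn_integral_cmult [symmetric]) (auto simp: mult_ac)

lemma kernel_convolution_add:
  assumes [measurable]: "f \<in> borel_measurable borel" "g \<in> borel_measurable borel"
  shows "kernel_convolution (\<lambda>s. f s + g s) t = kernel_convolution f t + kernel_convolution g t"
  unfolding kernel_convolution_def
  by (subst nn_integral_add [symmetric]) (auto simp: algebra_simps)

lemma kernel_convolution_kernel_modulus:
  assumes "t > 0"
  shows "kernel_convolution (\<lambda>s. ennreal (kernel_modulus s)) t = 1 / 4"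
proof -
  have "kernel_convolution (\<lambda>s. ennreal (kernel_modulus s)) t
      = (\<integral>\<^sup>+s\<in>{0<..<t}. ennreal (kernel_modulus (t - s) * kernel_modulus (s - 0)) \<partial>lborel)"
    unfolding kernel_convolution_def
    by (intro nn_integral_cong) (simp add: indicator_def ennreal_mult kernel_modulus_nonneg)
  with assms show ?thesis by (simp only: set_nn_integral_kernel_modulus_convolution)
qed

lemma kernel_convolution_kernel_convolution:
  assumes [measurable]: "f \<in> borel_measurable borel"
  shows "kernel_convolution (kernel_convolution f) t = (\<integral>\<^sup>+r\<in>{0<..<t}. f r \<partial>lborel) / 4"
proof -
  define F where "F s r = (if 0 < r \<and> r < s \<and> s < t
    then ennreal (kernel_modulus (t - s) * kernel_modulus (s - r)) * f r else 0)" for s r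
  have [measurable]: "case_prod F \<in> borel_measurable (lborel \<Otimes>\<^sub>M lborel)"
    unfolding F_def by measurable
  have inner: "(\<integral>\<^sup>+s. F s r \<partial>lborel) = f r * indicator {0<..<t} r / 4" for r
  proof (cases "r \<in> {0<..<t}")
    case True
    then have "(\<integral>\<^sup>+s. F s r \<partial>lborel)
        = (\<integral>\<^sup>+s\<in>{r<..<t}. ennreal (kernel_modulus (t - s) * kernel_modulus (s - r)) \<partial>lborel) * f r"
      by (subst nn_integral_multc [symmetric]) (auto intro!: nn_integral_cong
          simp: F_def indicator_def kernel_modulus_def)
    also have "\<dots> = 1 / 4 * f r"
      using True by (simp only: set_nn_integral_kernel_modulus_convolution greaterThanLessThan_iff)
    finally show ?thesis
      using True by (simp add: divide_ennreal_def mult.commute)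
  next
    case False
    then have "F s r = 0" for s by (auto simp: F_def)
    with False show ?thesis by simp
  qed
  have "kernel_convolution (kernel_convolution f) t = (\<integral>\<^sup>+s. \<integral>\<^sup>+r. F s r \<partial>lborel \<partial>lborel)"
    unfolding kernel_convolution_def [of "kernel_convolution f"]
  proof (intro nn_integral_cong)
    fix s
    show "ennreal (kernel_modulus (t - s)) * kernel_convolution f s * indicator {0<..<t} s
        = (\<integral>\<^sup>+r. F s r \<partial>lborel)"
    proof (cases "s \<in> {0<..<t}")
      case True
      then show ?thesis
        unfolding kernel_convolution_def
        by (subst nn_integral_cmult [symmetric]) (auto intro!: nn_integral_cong
          simp: F_def indicator_def ennreal_mult kernel_modulus_nonneg mult_ac)
    next
      case False
      then have "F s r = 0" for r by (auto simp: F_def)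
      with False show ?thesis by simp
    qed
  qed
  also have "\<dots> = (\<integral>\<^sup>+r. \<integral>\<^sup>+s. F s r \<partial>lborel \<partial>lborel)"
    by (rule lborel_pair.Fubini' [symmetric]) simp
  also have "\<dots> = (\<integral>\<^sup>+r\<in>{0<..<t}. f r \<partial>lborel) / 4"
    by (simp add: inner divide_ennreal_def nn_integral_multc)
  finally show ?thesis .
qed

lemma set_nn_integral_le_kernel_convolution:
  assumes [measurable]: "f \<in> borel_measurable borel" and "t > 0"
  shows "(\<integral>\<^sup>+r\<in>{0<..<t}. f r \<partial>lborel) \<le> ennreal (sqrt (4 * pi * t)) * kernel_convolution f t"
proof -
  have "f r \<le> ennreal (sqrt (4 * pi * t)) * ennreal (kernel_modulus (t - r)) * f r"
    if "r \<in> {0<..<t}" for r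
  proof -
    have "1 \<le> ennreal (sqrt (4 * pi * t)) * ennreal (kernel_modulus (t - r))"
      using that by (auto simp: kernel_modulus_def ennreal_mult' [symmetric] divide_simps
        intro!: ennreal_leI)
    then show ?thesis using mult_right_mono [of 1 _ "f r"] by simp
  qed
  then have "(\<integral>\<^sup>+r\<in>{0<..<t}. f r \<partial>lborel)
      \<le> (\<integral>\<^sup>+r. ennreal (sqrt (4 * pi * t)) *
            (ennreal (kernel_modulus (t - r)) * f r * indicator {0<..<t} r) \<partial>lborel)"
    by (intro nn_integral_mono) (auto simp: indicator_def mult.assoc [symmetric]
      intro: order_trans [OF _ mult_right_mono])
  also have "\<dots> = ennreal (sqrt (4 * pi * t)) * kernel_convolution f t"
    unfolding kernel_convolution_def by (rule nn_integral_cmult) measurable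
  finally show ?thesis .
qed

lemma ennreal_quarter: "(1 / 4 :: ennreal) = ennreal (1 / 4)"
  by (metis ennreal_1 ennreal_divide_numeral zero_le_one)

lemma ennreal_absorb_le:
  fixes x :: ennreal and A \<theta> :: real
  assumes "x < \<infinity>" "x \<le> ennreal A + ennreal \<theta> * x" "0 \<le> A" "0 \<le> \<theta>" "\<theta> < 1"
  shows "x \<le> ennreal (A / (1 - \<theta>))"
proof -
  obtain j where j: "x = ennreal j" "0 \<le> j"
    using assms(1) by (cases x) auto
  have "j \<le> A + \<theta> * j"
    using assms(2-4) j by (simp add: ennreal_mult [symmetric] flip: ennreal_plus)
  then have "j \<le> A / (1 - \<theta>)"
    using assms(5) by (simp add: le_divide_eq algebra_simps)
  then show ?thesis
    using j by (simp add: ennreal_leI)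
qed

lemma norm_mult_plus_Re_le:
  "cmod (complex_of_real a * z + complex_of_real (b * Re z)) \<le> (\<bar>a\<bar> + \<bar>b\<bar>) * cmod z"
proof -
  have "cmod (complex_of_real a * z + complex_of_real (b * Re z)) \<le> \<bar>a\<bar> * cmod z + \<bar>b\<bar> * \<bar>Re z\<bar>"
    using norm_triangle_ineq [of "complex_of_real a * z" "complex_of_real (b * Re z)"]
    by (simp add: norm_mult abs_mult)
  also have "\<dots> \<le> \<bar>a\<bar> * cmod z + \<bar>b\<bar> * cmod z"
    by (intro add_left_mono mult_left_mono abs_Re_le_cmod) simp
  finally show ?thesis by (simp add: algebra_simps)
qed

text \<open>The cut-off at \<open>s \<le> 0\<close>, where \<open>u\<close> is unconstrained, makes the source Borel measurable.\<close>
definition source_modulus :: "real \<Rightarrow> real \<Rightarrow> (real \<Rightarrow> real \<Rightarrow> complex) \<Rightarrow> real \<Rightarrow> ennreal" where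
  "source_modulus a b u s =
     (if 0 < s then ennreal (cmod (complex_of_real a * u 0 s + complex_of_real (b * Re (u 0 s)))) else 0)"

lemma source_modulus_le: "source_modulus a b u s \<le> ennreal (\<bar>a\<bar> + \<bar>b\<bar>) * ennreal (cmod (u 0 s))"
proof -
  have "ennreal (cmod (complex_of_real a * u 0 s + complex_of_real (b * Re (u 0 s))))
      \<le> ennreal ((\<bar>a\<bar> + \<bar>b\<bar>) * cmod (u 0 s))"
    by (rule ennreal_leI [OF norm_mult_plus_Re_le])
  also have "\<dots> = ennreal (\<bar>a\<bar> + \<bar>b\<bar>) * ennreal (cmod (u 0 s))"
    by (rule ennreal_mult) simp_all
  finally show ?thesis by (simp add: source_modulus_def del: ennreal_plus)
qed

lemma kernel_convolution_source_modulus: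
  assumes "t > 0"
  shows "kernel_convolution (source_modulus a b u) t = (\<integral>\<^sup>+s. ennreal (norm (indicator {0<..<t} s *\<^sub>R
    (free_kernel \<omega> x (t - s) * (complex_of_real a * u 0 s + complex_of_real (b * Re (u 0 s)))))) \<partial>lborel)"
  unfolding kernel_convolution_def
  by (intro nn_integral_cong)
    (auto simp: indicator_def source_modulus_def norm_mult norm_free_kernel ennreal_mult)

lemma kernel_convolution_source_modulus_finite:
  assumes "delta_duhamel_solution \<omega> a b u" and "t > 0"
  shows "kernel_convolution (source_modulus a b u) t < \<infinity>"
  using assms unfolding delta_duhamel_solution_def set_integrable_def integrable_iff_bounded
    kernel_convolution_source_modulus [OF \<open>t > 0\<close>, of a b u \<omega> 0]
  by blast

lemma norm_duhamel_solution_le: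
  assumes "delta_duhamel_solution \<omega> a b u" and "t > 0"
  shows "ennreal (cmod (u x t)) \<le> ennreal (kernel_modulus t) + kernel_convolution (source_modulus a b u) t"
proof -
  define f where "f s = indicator {0<..<t} s *\<^sub>R
    (free_kernel \<omega> x (t - s) * (complex_of_real a * u 0 s + complex_of_real (b * Re (u 0 s))))" for s
  have "integrable lborel f" and u: "u x t = free_kernel \<omega> x t + \<i> * integral\<^sup>L lborel f"
    using assms unfolding delta_duhamel_solution_def set_integrable_def set_lebesgue_integral_def f_def
    by blast+
  have "cmod (u x t) \<le> cmod (free_kernel \<omega> x t) + norm (integral\<^sup>L lborel f)"
    unfolding u using norm_triangle_ineq [of "free_kernel \<omega> x t" "\<i> * integral\<^sup>L lborel f"]
    by (simp add: norm_mult)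
  then have "ennreal (cmod (u x t)) \<le> ennreal (cmod (free_kernel \<omega> x t)) + ennreal (norm (integral\<^sup>L lborel f))"
    by (simp add: ennreal_leI flip: ennreal_plus)
  also have "\<dots> \<le> ennreal (kernel_modulus t) + kernel_convolution (source_modulus a b u) t"
  proof -
    have "kernel_convolution (source_modulus a b u) t = (\<integral>\<^sup>+s. ennreal (norm (f s)) \<partial>lborel)"
      unfolding f_def by (rule kernel_convolution_source_modulus [OF \<open>t > 0\<close>])
    then show ?thesis
      using integral_norm_bound_ennreal [OF \<open>integrable lborel f\<close>] \<open>t > 0\<close>
      by (simp add: norm_free_kernel add_left_mono)
  qed
  finally show ?thesis .
qed

lemma borel_measurable_source_modulus:
  assumes "delta_duhamel_solution \<omega> a b u"
  shows "source_modulus a b u \<in> borel_measurable borel"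
proof (rule borel_measurable_LIMSEQ_order)
  define g where "g n s = source_modulus a b u s * indicator {..<real (Suc n)} s" for n s
  show "g n \<in> borel_measurable borel" for n
  proof -
    define t where "t = real (Suc n)"
    have "t > 0" by (simp add: t_def)
    define f where "f s = indicator {0<..<t} s *\<^sub>R
      (free_kernel \<omega> 0 (t - s) * (complex_of_real a * u 0 s + complex_of_real (b * Re (u 0 s))))" for s
    have [measurable]: "f \<in> borel_measurable borel"
      using assms \<open>t > 0\<close> borel_measurable_integrable
      unfolding delta_duhamel_solution_def set_integrable_def f_def by fastforce
    have "g n = (\<lambda>s. ennreal (sqrt (4 * pi * (t - s))) * ennreal (norm (f s)))"
      by (auto simp: fun_eq_iff g_def f_def t_def source_modulus_def indicator_def norm_mult
        norm_free_kernel kernel_modulus_def ennreal_mult [symmetric])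
    then show ?thesis by simp
  qed
  show "(\<lambda>n. g n s) \<longlonglongrightarrow> source_modulus a b u s" for s
  proof (rule tendsto_eventually)
    have "s < real (Suc n)" if "n \<ge> nat \<lceil>s\<rceil>" for n
      using that by linarith
    then show "\<forall>\<^sub>F n in sequentially. g n s = source_modulus a b u s"
      unfolding eventually_sequentially g_def by (intro exI [of _ "nat \<lceil>s\<rceil>"]) auto
  qed
qed

lemma kernel_convolution_source_modulus_self_bound:
  assumes sol: "delta_duhamel_solution \<omega> a b u" and "t > 0"
  defines "J \<equiv> kernel_convolution (source_modulus a b u)" and "K \<equiv> \<bar>a\<bar> + \<bar>b\<bar>"
  shows "J t \<le> ennreal (K / 4) + ennreal (K * sqrt (4 * pi * t) / 4) * J t"
proof -
  have "K \<ge> 0" by (simp add: K_def)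
  have [measurable]: "source_modulus a b u \<in> borel_measurable borel"
    by (rule borel_measurable_source_modulus [OF sol])
  have [measurable]: "J \<in> borel_measurable borel"
    unfolding J_def by measurable
  have "J t \<le> kernel_convolution (\<lambda>s. ennreal K * (ennreal (kernel_modulus s) + J s)) t"
    unfolding J_def
  proof (rule kernel_convolution_mono)
    fix s :: real assume "s \<in> {0<..<t}"
    have "source_modulus a b u s \<le> ennreal K * ennreal (cmod (u 0 s))"
      unfolding K_def by (rule source_modulus_le)
    also have "\<dots> \<le> ennreal K * (ennreal (kernel_modulus s) + kernel_convolution (source_modulus a b u) s)"
      using norm_duhamel_solution_le [OF sol, of s 0] \<open>s \<in> {0<..<t}\<close> by (auto intro: mult_left_mono)
    finally show "source_modulus a b u s
        \<le> ennreal K * (ennreal (kernel_modulus s) + kernel_convolution (source_modulus a b u) s)" .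
  qed
  also have "\<dots> = ennreal K * (kernel_convolution (\<lambda>s. ennreal (kernel_modulus s)) t + kernel_convolution J t)"
    by (simp add: kernel_convolution_cmult kernel_convolution_add)
  also have "\<dots> = ennreal K * (1 / 4 + (\<integral>\<^sup>+r\<in>{0<..<t}. source_modulus a b u r \<partial>lborel) / 4)"
    using \<open>t > 0\<close>
    by (simp add: kernel_convolution_kernel_modulus J_def kernel_convolution_kernel_convolution)
  also have "\<dots> \<le> ennreal K * (1 / 4 + ennreal (sqrt (4 * pi * t)) * J t / 4)"
    using set_nn_integral_le_kernel_convolution [of "source_modulus a b u" t] \<open>t > 0\<close>
    by (auto simp: J_def intro!: mult_left_mono add_left_mono divide_right_mono_ennreal)
  also have "\<dots> = ennreal (K / 4) + ennreal (K * sqrt (4 * pi * t) / 4) * J t"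
  proof -
    have "ennreal (K * sqrt (4 * pi * t) / 4) = ennreal K * ennreal (sqrt (4 * pi * t)) / 4"
      using \<open>t > 0\<close> \<open>K \<ge> 0\<close> by (simp add: ennreal_mult ennreal_divide_numeral [symmetric])
    moreover have "ennreal (K / 4) = ennreal K * (1 / 4)"
      using \<open>K \<ge> 0\<close> by (simp add: ennreal_quarter ennreal_mult [symmetric])
    ultimately show ?thesis
      by (simp add: distrib_left ennreal_times_divide ennreal_divide_times mult_ac)
  qed
  finally show ?thesis .
qed

lemma kernel_convolution_source_modulus_le:
  assumes sol: "delta_duhamel_solution \<omega> a b u" and "t > 0"
    and small: "(\<bar>a\<bar> + \<bar>b\<bar>)\<^sup>2 * pi * t \<le> 1"
  shows "kernel_convolution (source_modulus a b u) t \<le> ennreal ((\<bar>a\<bar> + \<bar>b\<bar>) / 2)"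
proof -
  define K where "K = \<bar>a\<bar> + \<bar>b\<bar>"
  have "K * sqrt (4 * pi * t) = sqrt (4 * (K\<^sup>2 * pi * t))"
    by (simp add: K_def real_sqrt_mult)
  also have "\<dots> \<le> sqrt 4"
    using small by (intro real_sqrt_le_mono) (simp add: K_def)
  finally have "K * sqrt (4 * pi * t) / 4 \<le> 1 / 2" by simp
  moreover have "K \<ge> 0" "sqrt (4 * pi * t) \<ge> 0"
    using \<open>t > 0\<close> by (simp_all add: K_def)
  ultimately have "kernel_convolution (source_modulus a b u) t \<le> ennreal (K / 4 / (1 - K * sqrt (4 * pi * t) / 4))"
    using kernel_convolution_source_modulus_self_bound [OF sol \<open>t > 0\<close>]
      kernel_convolution_source_modulus_finite [OF sol \<open>t > 0\<close>]
    by (intro ennreal_absorb_le) (simp_all add: K_def)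
  also have "\<dots> \<le> ennreal (K / 4 / (1 / 2))"
    using \<open>K * sqrt (4 * pi * t) / 4 \<le> 1 / 2\<close> \<open>K \<ge> 0\<close>
    by (intro ennreal_leI divide_left_mono) simp_all
  also have "K / 4 / (1 / 2) = K / 2" by simp
  finally show ?thesis unfolding K_def .
qed

lemma norm_duhamel_solution_le_small_time:
  assumes sol: "delta_duhamel_solution \<omega> a b u" and "t > 0"
    and small: "(\<bar>a\<bar> + \<bar>b\<bar>)\<^sup>2 * pi * t \<le> 1"
  shows "cmod (u x t) \<le> kernel_modulus t + (\<bar>a\<bar> + \<bar>b\<bar>) / 2"
proof -
  have "ennreal (cmod (u x t)) \<le> ennreal (kernel_modulus t) + ennreal ((\<bar>a\<bar> + \<bar>b\<bar>) / 2)"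
    using norm_duhamel_solution_le [OF sol \<open>t > 0\<close>, of x]
      kernel_convolution_source_modulus_le [OF sol \<open>t > 0\<close> small]
    by (meson add_left_mono order_trans)
  then show ?thesis
    using \<open>t > 0\<close> by (simp add: kernel_modulus_nonneg flip: ennreal_plus)
qed

lemma kernel_modulus_plus_le_powr:
  assumes "0 < t" "t \<le> 1" "c \<ge> 0"
  shows "kernel_modulus t + c \<le> (1 + c) * t powr (-1/2)"
proof -
  have "kernel_modulus t \<le> t powr (-1/2)"
    using \<open>0 < t\<close> pi_gt3 by (simp add: kernel_modulus_powr divide_le_eq)
  moreover have "c * 1 \<le> c * t powr (-1/2)"
    using powr_mono2' [of "-1/2" t 1] assms by (intro mult_left_mono) simp_all
  ultimately show ?thesis by (simp add: algebra_simps)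
qed

theorem lemma8p1:
  fixes \<omega> a b :: real and u :: "real \<Rightarrow> real \<Rightarrow> complex"
  assumes "\<omega> > 0"
    and "delta_duhamel_solution \<omega> a b u"
  shows "\<exists>C t0. t0 > 0 \<and> (\<forall>t. 0 < t \<and> t < t0 \<longrightarrow>
           (\<forall>x. cmod (u x t) \<le> C * t powr (-1/2)))"
proof -
  define K where "K = \<bar>a\<bar> + \<bar>b\<bar>"
  define t0 where "t0 = 1 / (pi * (K + 1)\<^sup>2)"
  have "pi * (K + 1)\<^sup>2 > 0" by (simp add: K_def add_pos_nonneg)
  have "cmod (u x t) \<le> (1 + K / 2) * t powr (-1/2)" if "0 < t" "t < t0" for t x
  proof -
    have "pi * (K + 1)\<^sup>2 * t < 1"
      using \<open>t < t0\<close> \<open>pi * (K + 1)\<^sup>2 > 0\<close> unfolding t0_def by (simp add: less_divide_eq mult.commute)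
    moreover have "K\<^sup>2 * (pi * t) \<le> (K + 1)\<^sup>2 * (pi * t)" "1 * (pi * t) \<le> (K + 1)\<^sup>2 * (pi * t)"
      using \<open>0 < t\<close> by (intro mult_right_mono; simp add: K_def power_mono)+
    moreover have "3 * t < pi * t"
      using pi_gt3 \<open>0 < t\<close> by simp
    ultimately have "K\<^sup>2 * pi * t \<le> 1" and "t \<le> 1"
      by (simp_all only: mult_ac)
    then show ?thesis
      using norm_duhamel_solution_le_small_time [OF assms(2) \<open>0 < t\<close>, of x]
        kernel_modulus_plus_le_powr [OF \<open>0 < t\<close>, of "K / 2"]
      by (simp add: K_def)
  qed
  moreover have "t0 > 0" using \<open>pi * (K + 1)\<^sup>2 > 0\<close> by (simp add: t0_def)
  ultimately show ?thesis by blast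
qed

end
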